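(* If $C$ is a conic through $O$, smooth at $O$, then for rational $s\ge1$ $$\Delta_{C,s_+}=\begin{cases}\Delta_{1,s,1}&\text{if }1\le s<2,\\ \Delta_{2,\frac s2,\frac12}&\text{if }s\ge2.\end{cases}$$ So there is only one mutation, at $s=2$, and $v_1(C,s)$ is minimal only when $s=1$ and $s=4$.
   Context: Work over $\mathbb C$; $x=X/Z$, $y=Y/Z$, $O=(0,0)$; $C$ tangent to $\{y=0\}$ at $O$, locally $x\mapsto(x,\xi(x))$, $\xi(0)=\xi'(0)=0$. For $f\ne0$ with $C$-expansion $f=\sum a_{ij}x^i(y-\xi(x))^j$, $v_1(C,s;f)=\min\{i+sj:a_{ij}\ne0\}$ and $v_+(C,s)(f)=(v_1(C,s;f),\min\{j:\exists i,\ a_{ij}\ne0,\ i+sj=v_1(C,s;f)\})$. $\Delta_{C,s_+}$ is the closure of the convex hull of $\{v_+(C,s)(F/Z^k)/k:k\ge1,\ F\ne0\text{ homogeneous of degree }k\}$. $\Delta_{a,b,c}$ is the triangle with vertices $(0,0),(a,0),(b,c)$. $\hat\mu(C,s)=\lim_k\frac1k\max\{v_1(C,s;F/Z^k)\}$ over nonzero homogeneous $F$ of degree $k$; $v_1(C,s)$ is minimal if $\hat\mu(C,s)=\sqrt s$. With $d=\deg C$, $\Delta_{C,s_+}$ mutates at $s_0\in(1,d^2)$ if it is not continuous there, where continuity at $s_0$ means: for every $\epsilon>0$ there is $\delta>0$ such that for all rational $s$ with $|s-s_0|<\delta$ every vertex of $\Delta_{C,s_+}$ is within distance $\epsilon$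 of $\partial\Delta_{C,s_{0+}}$. *)

theory Defs
  imports "HOL-Analysis.Analysis" "HOL-Computational_Algebra.Computational_Algebra"
begin

text \<open>Affine polynomials in x = X/Z, y = Y/Z are modelled as complex poly poly:
  a polynomial in y whose coefficients are polynomials in x.
  A nonzero homogeneous F of degree k corresponds to f = F/Z^k, a nonzero
  polynomial of total degree at most k.\<close>

type_synonym bipoly = "complex poly poly"

definition tdeg :: "bipoly \<Rightarrow> nat" where
  "tdeg f = Max (insert 0 {degree (coeff f q) + q | q. coeff f q \<noteq> 0})"

definition val_O :: "bipoly \<Rightarrow> complex" where
  "val_O f = poly.coeff (coeff f 0) 0"
definition dx_O :: "bipoly \<Rightarrow> complex" where
  "dx_O f = poly.coeff (coeff f 0) 1"
definition dy_O :: "bipoly \<Rightarrow> complex" where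
  "dy_O f = poly.coeff (coeff f 1) 0"

definition subst_branch :: "complex fps \<Rightarrow> bipoly \<Rightarrow> complex fps" where
  "subst_branch xi f = (\<Sum>q\<le>degree f. fps_of_poly (coeff f q) * xi ^ q)"

text \<open>Coefficient a_ij of the C-expansion f = sum a_ij x^i (y - xi(x))^j.\<close>
definition cexp :: "complex fps \<Rightarrow> bipoly \<Rightarrow> nat \<Rightarrow> nat \<Rightarrow> complex" where
  "cexp xi f i j = (\<Sum>q\<le>degree f. of_nat (q choose j) *
       fps_nth (fps_of_poly (coeff f q) * xi ^ (q - j)) i)"

definition v1 :: "complex fps \<Rightarrow> real \<Rightarrow> bipoly \<Rightarrow> real" where
  "v1 xi s f = Inf {real i + s * real j | i j. cexp xi f i j \<noteq> 0}"

definition vplus :: "complex fps \<Rightarrow> real \<Rightarrow> bipoly \<Rightarrow> real \<times> real" where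
  "vplus xi s f = (v1 xi s f,
     real (LEAST j. \<exists>i. cexp xi f i j \<noteq> 0 \<and> real i + s * real j = v1 xi s f))"

definition Delta_plus :: "complex fps \<Rightarrow> real \<Rightarrow> (real \<times> real) set" where
  "Delta_plus xi s = closure (convex hull
     {scaleR (1 / real k) (vplus xi s f) | k f. k \<ge> 1 \<and> f \<noteq> 0 \<and> tdeg f \<le> k})"

definition triangle :: "real \<Rightarrow> real \<Rightarrow> real \<Rightarrow> (real \<times> real) set" where
  "triangle a b c = convex hull {(0,0), (a,0), (b,c)}"

definition muhat :: "complex fps \<Rightarrow> real \<Rightarrow> real" where
  "muhat xi s = lim (\<lambda>k. (1 / real k) *
       Sup {v1 xi s f | f. f \<noteq> 0 \<and> tdeg f \<le> k})"

definition v1_minimal :: "complex fps \<Rightarrow> real \<Rightarrow> bool" where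
  "v1_minimal xi s \<longleftrightarrow> muhat xi s = sqrt s"

definition Delta_continuous_at :: "complex fps \<Rightarrow> real \<Rightarrow> bool" where
  "Delta_continuous_at xi s0 \<longleftrightarrow>
     (\<forall>\<epsilon>>0. \<exists>\<delta>>0. \<forall>s\<in>\<rat>. \<bar>s - s0\<bar> < \<delta> \<longrightarrow>
        (\<forall>v. v extreme_point_of Delta_plus xi s \<longrightarrow>
             infdist v (frontier (Delta_plus xi s0)) < \<epsilon>))"

definition Delta_mutates_at :: "complex fps \<Rightarrow> nat \<Rightarrow> real \<Rightarrow> bool" where
  "Delta_mutates_at xi d s0 \<longleftrightarrow>
     s0 \<in> {1<..<real (d^2)} \<and> \<not> Delta_continuous_at xi s0"

end

theory Submission
  imports Defs
begin

text \<open>Substituting \<open>y = \<xi>(x) + (y - \<xi>(x))\<close> turns a polynomial into a power series in \<open>x\<close> and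
  \<open>y - \<xi>(x)\<close>, and \<open>v\<^sub>+(C,s)\<close> is read off from its initial form for the weight \<open>i + s j\<close>. Since \<open>\<xi>\<close>
  vanishes to order 2, for \<open>s < 2\<close> the monomial \<open>x\<^sup>a y\<^sup>b\<close> has initial form \<open>x\<^sup>a (y - \<xi>)\<^sup>b\<close>, so these
  leading terms cannot cancel and every \<open>f\<close> of degree \<open>\<le> k\<close> has \<open>v\<^sub>+ = (a + s b, b)\<close> with \<open>a + b \<le> k\<close>.
  For \<open>s \<ge> 2\<close> one first reduces \<open>x\<^sup>2\<close> modulo \<open>Q\<close>: \<open>f\<close> is a combination of \<open>x\<^sup>e y\<^sup>b Q\<^sup>m\<close> with \<open>e \<le> 1\<close>
  and \<open>2m + b + e \<le> k\<close>, whose initial forms \<open>\<xi>\<^sub>2\<^sup>b x\<^sup>e\<^sup>+\<^sup>2\<^sup>b (a\<^sub>0\<^sub>1 (y - \<xi>))\<^sup>m\<close> again have pairwise distinct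
  leading positions, giving \<open>v\<^sub>+ = (e + 2b + s m, m)\<close>. Dividing by \<open>k\<close> yields the two triangles. Their
  apex \<open>(s, 1)\<close> drops to \<open>(s/2, 1/2)\<close> at \<open>s = 2\<close>, which is the only mutation, and \<open>\<mu>\<close> is the largest
  first coordinate of the triangle, \<open>s\<close> resp. \<open>max 2 (s/2)\<close>, which equals \<open>\<surd>s\<close> only for \<open>s = 1, 4\<close>.\<close>

unbundle no vec_syntax

section \<open>The C-expansion as a bivariate power series\<close>

definition bconst :: "complex \<Rightarrow> bipoly" where "bconst c = [:[:c:]:]"
definition bX :: bipoly where "bX = [:[:0, 1:]:]"
definition bY :: bipoly where "bY = [:0, 1:]"

text \<open>Entry \<open>$ j $ i\<close> of \<open>cseries xi f\<close> is the coefficient \<open>a\<^sub>i\<^sub>j\<close> of the C-expansion: the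
  outer variable stands for \<open>y - \<xi>(x)\<close>, the inner one for \<open>x\<close>.\<close>

definition y_series :: "complex fps \<Rightarrow> complex fps fps" where
  "y_series xi = fps_const xi + fps_X"

definition cseries :: "complex fps \<Rightarrow> bipoly \<Rightarrow> complex fps fps" where
  "cseries xi f = poly (map_poly (\<lambda>p. fps_const (fps_of_poly p)) f) (y_series xi)"

lemma cseries_pCons: "cseries xi (pCons a p) = fps_const (fps_of_poly a) + y_series xi * cseries xi p"
  by (cases "a = 0 \<and> p = 0") (auto simp: cseries_def map_poly_pCons)

lemma cseries_0 [simp]: "cseries xi 0 = 0"
  by (simp add: cseries_def)

lemma cseries_const: "cseries xi [:a:] = fps_const (fps_of_poly a)"
  using cseries_pCons[of xi a 0] by simp

lemma cseries_add: "cseries xi (p + q) = cseries xi p + cseries xi q"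
proof (induction p arbitrary: q)
  case (pCons a p)
  then show ?case
    by (cases q) (simp add: cseries_pCons fps_of_poly_add algebra_simps)
qed simp

lemma cseries_mult: "cseries xi (p * q) = cseries xi p * cseries xi q"
proof (induction p)
  case (pCons a p)
  have "cseries xi (smult a q) = fps_const (fps_of_poly a) * cseries xi q" for q
    by (induction q) (auto simp: cseries_pCons fps_of_poly_mult algebra_simps)
  with pCons show ?case
    by (simp add: cseries_pCons cseries_add algebra_simps)
qed simp

lemma cseries_1 [simp]: "cseries xi 1 = 1"
  by (simp add: one_pCons cseries_const)

lemma cseries_power: "cseries xi (p ^ n) = cseries xi p ^ n"
  by (induction n) (auto simp: cseries_mult)

lemma cseries_sum: "cseries xi (sum f S) = (\<Sum>t\<in>S. cseries xi (f t))"
  by (induction S rule: infinite_finite_induct) (auto simp: cseries_add)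

lemma cseries_bconst: "cseries xi (bconst c) = fps_const (fps_const c)"
  by (simp add: bconst_def cseries_const fps_of_poly_const)

lemma cseries_bX: "cseries xi bX = fps_const fps_X"
  by (simp add: bX_def cseries_const)

lemma cseries_bY: "cseries xi bY = y_series xi"
  by (simp add: bY_def cseries_pCons cseries_const)

lemma y_series_nth: "y_series xi $ j = (if j = 0 then xi else 0) + (if j = 1 then 1 else 0)"
  by (simp add: y_series_def)

lemma y_series_power_nth: "(y_series xi ^ q) $ j = of_nat (q choose j) * xi ^ (q - j)"
proof -
  have "(y_series xi ^ q) $ j
      = (\<Sum>k\<le>q. (of_nat (q choose k) * (fps_X ^ k * fps_const (xi ^ (q - k)))) $ j)"
    unfolding y_series_def add.commute[of "fps_const xi"] binomial_ring
    by (simp add: fps_sum_nth mult.assoc fps_const_power)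
  also have "\<dots> = (\<Sum>k\<le>q. if k = j then of_nat (q choose k) * xi ^ (q - k) else 0)"
    by (intro sum.cong refl) (simp add: fps_X_power_mult_nth flip: fps_of_nat)
  finally show ?thesis
    by (simp add: sum.delta')
qed

lemma cseries_eq_sum: "cseries xi f = (\<Sum>q\<le>degree f. fps_const (fps_of_poly (coeff f q)) * y_series xi ^ q)"
  unfolding cseries_def poly_altdef by (simp add: degree_map_poly coeff_map_poly)

lemma cseries_nth: "cseries xi f $ j $ i = cexp xi f i j"
  unfolding cseries_eq_sum cexp_def
  by (simp add: fps_sum_nth y_series_power_nth mult.left_commute[of "fps_of_poly _"]
      fps_mult_left_const_nth flip: fps_of_nat)

lemma subst_branch_eq: "subst_branch xi f = cseries xi f $ 0"
  unfolding subst_branch_def cseries_eq_sum by (simp add: fps_sum_nth y_series_power_nth)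

lemma tdeg_le_iff: "tdeg f \<le> k \<longleftrightarrow> (\<forall>q. coeff f q \<noteq> 0 \<longrightarrow> degree (coeff f q) + q \<le> k)"
proof -
  have "{degree (coeff f q) + q | q. coeff f q \<noteq> 0} \<subseteq> (\<lambda>q. degree (coeff f q) + q) ` {..degree f}"
    using le_degree by fastforce
  then have "finite {degree (coeff f q) + q | q. coeff f q \<noteq> 0}"
    using finite_subset by blast
  then show ?thesis
    unfolding tdeg_def by (auto simp: Max_le_iff)
qed

lemma tdeg_ge: "coeff f q \<noteq> 0 \<Longrightarrow> degree (coeff f q) + q \<le> tdeg f"
  using tdeg_le_iff[of f "tdeg f"] by auto

lemma tdeg_mult: "tdeg (f * g) \<le> tdeg f + tdeg g"
  unfolding tdeg_le_iff
proof (intro allI impI)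
  fix q assume ne: "coeff (f * g) q \<noteq> 0"
  have cm: "coeff (f * g) q = (\<Sum>i\<le>q. coeff f i * coeff g (q - i))"
    by (rule coeff_mult)
  have term_deg: "degree (coeff f i * coeff g (q - i)) + q \<le> tdeg f + tdeg g"
    if "i \<le> q" "coeff f i * coeff g (q - i) \<noteq> 0" for i
    using that tdeg_ge[of f i] tdeg_ge[of g "q - i"] degree_mult_le[of "coeff f i" "coeff g (q - i)"]
    by auto
  obtain i where "i \<le> q" "coeff f i * coeff g (q - i) \<noteq> 0"
    using ne unfolding cm by (metis (no_types, lifting) atMost_iff sum.neutral)
  then have "q \<le> tdeg f + tdeg g"
    using term_deg by fastforce
  moreover have "degree (coeff (f * g) q) \<le> tdeg f + tdeg g - q"
    unfolding cm using term_deg by (intro degree_sum_le) (auto, fastforce)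
  ultimately show "degree (coeff (f * g) q) + q \<le> tdeg f + tdeg g"
    by linarith
qed

lemma tdeg_power: "tdeg (f ^ n) \<le> n * tdeg f"
proof (induction n)
  case 0
  have "tdeg (1 :: bipoly) \<le> 0"
    unfolding tdeg_le_iff by (auto simp: coeff_1)
  then show ?case by simp
next
  case (Suc n)
  then show ?case
    using tdeg_mult[of f "f ^ n"] by simp
qed

lemma tdeg_bX: "tdeg bX \<le> 1"
  unfolding tdeg_le_iff bX_def by (auto simp: coeff_pCons split: nat.splits)

lemma tdeg_bY: "tdeg bY \<le> 1"
  unfolding tdeg_le_iff bY_def by (auto simp: coeff_pCons split: nat.splits)

lemma tdeg_induct [consumes 1, case_names add const mult_X mult_Y]:
  assumes "tdeg f \<le> k"
    and add: "\<And>k f g. P k f \<Longrightarrow> P k g \<Longrightarrow> P k (f + g)"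
    and const: "\<And>k c. P k (bconst c)"
    and mult_X: "\<And>k f. P k f \<Longrightarrow> P (Suc k) (bX * f)"
    and mult_Y: "\<And>k f. P k f \<Longrightarrow> P (Suc k) (bY * f)"
  shows "P k f"
proof -
  have univariate: "P k [:p:]" if "degree p \<le> k" for p k
    using that
  proof (induction p arbitrary: k)
    case 0
    then show ?case using const[of k 0] by (simp add: bconst_def)
  next
    case (pCons a p)
    show ?case
    proof (cases "p = 0")
      case True
      then show ?thesis using const[of k a] by (simp add: bconst_def)
    next
      case False
      then obtain k' where k: "k = Suc k'" "degree p \<le> k'"
        using pCons.prems by (cases k) auto
      have "P (Suc k') (bconst a + bX * [:p:])"
        by (rule add[OF const mult_X[OF pCons.IH[OF k(2)]]])
      moreover have "bconst a + bX * [:p:] = [:pCons a p:]"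
        by (simp add: bconst_def bX_def)
      ultimately show ?thesis
        using k(1) by simp
    qed
  qed
  show ?thesis
    using assms(1)
  proof (induction f arbitrary: k)
    case 0
    then show ?case using const[of k 0] by (simp add: bconst_def)
  next
    case (pCons p g)
    have deg_p: "degree p \<le> k"
      using tdeg_ge[of "pCons p g" 0] pCons.prems by (cases "p = 0") auto
    show ?case
    proof (cases "g = 0")
      case True
      then show ?thesis using univariate[OF deg_p] by simp
    next
      case False
      have deg_g: "coeff g q \<noteq> 0 \<Longrightarrow> degree (coeff g q) + Suc q \<le> k" for q
        using pCons.prems unfolding tdeg_le_iff by (metis coeff_pCons_Suc)
      obtain q0 where "coeff g q0 \<noteq> 0"
        using False by (metis leading_coeff_0_iff)
      then obtain k' where k': "k = Suc k'"
        using deg_g by (metis Suc_le_D add_Suc_right)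
      have "tdeg g \<le> k'"
        unfolding tdeg_le_iff using deg_g k' by auto
      then have "P k ([:p:] + bY * g)"
        using add[OF univariate[OF deg_p]] mult_Y[OF pCons.IH] k' by simp
      moreover have "[:p:] + bY * g = pCons p g"
        by (simp add: bY_def)
      ultimately show ?thesis by simp
    qed
  qed
qed

definition lincomb_of :: "('t \<Rightarrow> bipoly) \<Rightarrow> 't set \<Rightarrow> bipoly \<Rightarrow> bool" where
  "lincomb_of g T f \<longleftrightarrow> (\<exists>c. f = (\<Sum>t\<in>T. bconst (c t) * g t))"

lemma bconst_add: "bconst (a + b) = bconst a + bconst b"
  by (simp add: bconst_def)

lemma bconst_mult: "bconst (a * b) = bconst a * bconst b"
  by (simp add: bconst_def)

lemma bconst_0 [simp]: "bconst 0 = 0"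
  by (simp add: bconst_def)

lemma bconst_1 [simp]: "bconst 1 = 1"
  by (simp add: bconst_def one_pCons)

lemma lincomb_of_add:
  assumes "lincomb_of g T f1" "lincomb_of g T f2"
  shows "lincomb_of g T (f1 + f2)"
proof -
  obtain c1 c2 where "f1 = (\<Sum>t\<in>T. bconst (c1 t) * g t)" "f2 = (\<Sum>t\<in>T. bconst (c2 t) * g t)"
    using assms unfolding lincomb_of_def by blast
  then have "f1 + f2 = (\<Sum>t\<in>T. bconst (c1 t + c2 t) * g t)"
    by (simp add: bconst_add distrib_right sum.distrib)
  then show ?thesis
    unfolding lincomb_of_def by metis
qed

lemma lincomb_of_scale:
  assumes "lincomb_of g T f"
  shows "lincomb_of g T (bconst a * f)"
proof -
  obtain c where "f = (\<Sum>t\<in>T. bconst (c t) * g t)"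
    using assms unfolding lincomb_of_def by blast
  then have "bconst a * f = (\<Sum>t\<in>T. bconst (a * c t) * g t)"
    by (simp add: bconst_mult sum_distrib_left mult.assoc)
  then show ?thesis
    unfolding lincomb_of_def by metis
qed

lemma lincomb_of_diff: "lincomb_of g T f1 \<Longrightarrow> lincomb_of g T f2 \<Longrightarrow> lincomb_of g T (f1 - f2)"
proof -
  have "bconst (-1) = - 1"
    by (simp add: bconst_def one_pCons)
  then have "f1 - f2 = f1 + bconst (-1) * f2"
    by simp
  then show "lincomb_of g T f1 \<Longrightarrow> lincomb_of g T f2 \<Longrightarrow> lincomb_of g T (f1 - f2)"
    by (metis lincomb_of_add lincomb_of_scale)
qed

lemma lincomb_of_generator:
  assumes "finite T" "t0 \<in> T"
  shows "lincomb_of g T (g t0)"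
proof -
  have "(\<Sum>t\<in>T. bconst (if t = t0 then 1 else 0) * g t) = g t0"
    using assms by (simp add: if_distrib[of bconst] if_distrib[of "\<lambda>c. c * _"] sum.delta'
        cong: if_cong)
  then show ?thesis
    unfolding lincomb_of_def by metis
qed

lemma lincomb_of_sum:
  "finite S \<Longrightarrow> (\<And>x. x \<in> S \<Longrightarrow> lincomb_of g T (h x)) \<Longrightarrow> lincomb_of g T (sum h S)"
proof (induction S rule: finite_induct)
  case empty
  show ?case unfolding lincomb_of_def by (auto intro!: exI[of _ "\<lambda>_. 0"])
qed (auto intro: lincomb_of_add)

lemma lincomb_of_mult:
  assumes "finite T" "lincomb_of g T f" "\<And>t. t \<in> T \<Longrightarrow> lincomb_of g' T' (h * g t)"
  shows "lincomb_of g' T' (h * f)"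
proof -
  obtain c where "f = (\<Sum>t\<in>T. bconst (c t) * g t)"
    using assms(2) unfolding lincomb_of_def by blast
  then have "h * f = (\<Sum>t\<in>T. bconst (c t) * (h * g t))"
    by (simp add: sum_distrib_left algebra_simps)
  then show ?thesis
    using assms by (auto intro: lincomb_of_sum lincomb_of_scale)
qed

section \<open>Weighted orders and initial forms\<close>

definition weight_ge :: "real \<Rightarrow> complex fps fps \<Rightarrow> real \<Rightarrow> bool" where
  "weight_ge s F v \<longleftrightarrow> (\<forall>i j. real i + s * real j < v \<longrightarrow> F $ j $ i = 0)"

definition initial :: "real \<Rightarrow> real \<Rightarrow> complex fps fps \<Rightarrow> complex fps fps" where
  "initial s v F = Abs_fps (\<lambda>j. Abs_fps (\<lambda>i. if real i + s * real j = v then F $ j $ i else 0))"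

lemma initial_nth: "initial s v F $ j $ i = (if real i + s * real j = v then F $ j $ i else 0)"
  by (simp add: initial_def)

lemma initial_nth_nonzero_imp: "initial s v F $ j $ i \<noteq> 0 \<Longrightarrow> real i + s * real j = v"
  by (simp add: initial_nth split: if_splits)

lemma fps_fps_mult_nth:
  "(F * G :: 'a::comm_ring_1 fps fps) $ j $ i
     = (\<Sum>j1=0..j. \<Sum>i1=0..i. F $ j1 $ i1 * G $ (j - j1) $ (i - i1))"
  by (simp add: fps_mult_nth fps_sum_nth)

lemma weight_diff:
  "i1 \<le> i \<Longrightarrow> j1 \<le> j \<Longrightarrow>
    real (i - i1) + s * real (j - j1) = (real i + s * real j) - (real i1 + s * real j1)"
  by (simp add: of_nat_diff algebra_simps)

lemma weight_ge_mono: "weight_ge s F w \<Longrightarrow> v \<le> w \<Longrightarrow> weight_ge s F v"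
  unfolding weight_ge_def by force

lemma weight_ge_sum:
  "(\<And>t. t \<in> T \<Longrightarrow> weight_ge s (F t) v) \<Longrightarrow> weight_ge s (\<Sum>t\<in>T. F t) v"
  unfolding weight_ge_def by (simp add: fps_sum_nth)

lemma weight_ge_scale: "weight_ge s F v \<Longrightarrow> weight_ge s (fps_const (fps_const c) * F) v"
  unfolding weight_ge_def by simp

lemma weight_ge_one: "s \<ge> 0 \<Longrightarrow> weight_ge s 1 0"
  unfolding weight_ge_def by (auto simp: fps_one_nth)

lemma weight_ge_mult:
  assumes F: "weight_ge s F a" and G: "weight_ge s G b"
  shows "weight_ge s (F * G) (a + b)"
  unfolding weight_ge_def fps_fps_mult_nth
proof (intro allI impI sum.neutral ballI)
  fix i j j1 i1
  assume lt: "real i + s * real j < a + b" and "j1 \<in> {0..j}" "i1 \<in> {0..i}"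
  then have "real i1 + s * real j1 < a \<or> real (i - i1) + s * real (j - j1) < b"
    using weight_diff[of i1 i j1 j s] by auto
  then show "F $ j1 $ i1 * G $ (j - j1) $ (i - i1) = 0"
    using F G unfolding weight_ge_def by auto
qed

lemma weight_ge_power: "s \<ge> 0 \<Longrightarrow> weight_ge s F a \<Longrightarrow> weight_ge s (F ^ n) (real n * a)"
  by (induction n) (auto simp: weight_ge_one algebra_simps dest: weight_ge_mult)

lemma initial_eq_0: "weight_ge s F w \<Longrightarrow> v < w \<Longrightarrow> initial s v F = 0"
  unfolding weight_ge_def by (intro fps_ext) (simp add: initial_nth)

lemma initial_sum: "initial s v (\<Sum>t\<in>T. F t) = (\<Sum>t\<in>T. initial s v (F t))"
  by (intro fps_ext) (simp add: initial_nth fps_sum_nth)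

lemma initial_scale:
  "initial s v (fps_const (fps_const c) * F) = fps_const (fps_const c) * initial s v F"
  by (intro fps_ext) (simp add: initial_nth)

lemma initial_one: "initial s 0 1 = 1"
  by (intro fps_ext) (auto simp: initial_nth fps_one_nth)

lemma initial_mult:
  assumes F: "weight_ge s F a" and G: "weight_ge s G b"
  shows "initial s (a + b) (F * G) = initial s a F * initial s b G"
proof (intro fps_ext)
  fix j i
  have termwise: "(if real i + s * real j = a + b then F $ j1 $ i1 * G $ (j - j1) $ (i - i1) else 0)
      = initial s a F $ j1 $ i1 * initial s b G $ (j - j1) $ (i - i1)"
    if "i1 \<le> i" "j1 \<le> j" for i1 j1
  proof -
    have w: "real (i - i1) + s * real (j - j1) = (real i + s * real j) - (real i1 + s * real j1)"
      using that by (rule weight_diff)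
    consider "real i1 + s * real j1 < a" | "real i1 + s * real j1 = a"
      | "real i1 + s * real j1 > a" by linarith
    then show ?thesis
    proof cases
      case 3
      then have "real i + s * real j = a + b \<Longrightarrow> real (i - i1) + s * real (j - j1) < b"
        using w by linarith
      then show ?thesis
        using 3 G unfolding weight_ge_def by (auto simp: initial_nth)
    qed (use F w in \<open>auto simp: initial_nth weight_ge_def\<close>)
  qed
  have "initial s (a + b) (F * G) $ j $ i = (\<Sum>j1=0..j. \<Sum>i1=0..i.
        if real i + s * real j = a + b then F $ j1 $ i1 * G $ (j - j1) $ (i - i1) else 0)"
    by (cases "real i + s * real j = a + b") (simp_all add: initial_nth fps_fps_mult_nth)
  also have "\<dots> = (\<Sum>j1=0..j. \<Sum>i1=0..i. initial s a F $ j1 $ i1 * initial s b G $ (j - j1) $ (i - i1))"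
    using termwise by (intro sum.cong) auto
  also have "\<dots> = (initial s a F * initial s b G) $ j $ i"
    by (simp only: fps_fps_mult_nth)
  finally show "initial s (a + b) (F * G) $ j $ i = (initial s a F * initial s b G) $ j $ i" .
qed

lemma initial_power:
  assumes "s \<ge> 0" "weight_ge s F a"
  shows "initial s (real n * a) (F ^ n) = initial s a F ^ n"
proof (induction n)
  case (Suc n)
  have "real (Suc n) * a = a + real n * a"
    by (simp add: algebra_simps)
  then show ?case
    using initial_mult[OF assms(2) weight_ge_power[OF assms]] Suc by simp
qed (simp add: initial_one)

lemma vplus_eqI:
  assumes ge: "weight_ge s (cseries xi f) v"
    and lead: "initial s v (cseries xi f) $ j0 $ i0 \<noteq> 0"
    and below: "\<And>i j. j < j0 \<Longrightarrow> initial s v (cseries xi f) $ j $ i = 0"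
  shows "vplus xi s f = (v, real j0)"
proof -
  let ?A = "{real i + s * real j | i j. cexp xi f i j \<noteq> 0}"
  have on_line: "real i0 + s * real j0 = v"
    using lead by (rule initial_nth_nonzero_imp)
  have "v \<in> ?A"
    using lead on_line by (auto simp: initial_nth cseries_nth)
  moreover have "v \<le> x" if "x \<in> ?A" for x
    using that ge unfolding weight_ge_def by (auto simp: cseries_nth not_less[symmetric])
  ultimately have v1: "v1 xi s f = v"
    unfolding v1_def by (intro cInf_eq_minimum) auto
  have "(LEAST j. \<exists>i. cexp xi f i j \<noteq> 0 \<and> real i + s * real j = v) = j0"
  proof (rule Least_equality)
    show "\<exists>i. cexp xi f i j0 \<noteq> 0 \<and> real i + s * real j0 = v"
      using lead on_line by (auto simp: initial_nth cseries_nth)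
  next
    fix j assume "\<exists>i. cexp xi f i j \<noteq> 0 \<and> real i + s * real j = v"
    then obtain i where "cexp xi f i j \<noteq> 0" "real i + s * real j = v"
      by blast
    then have "initial s v (cseries xi f) $ j $ i \<noteq> 0"
      by (simp add: initial_nth cseries_nth)
    then show "j0 \<le> j"
      using below not_less by blast
  qed
  then show ?thesis
    unfolding vplus_def v1 by simp
qed

text \<open>The leading terms of minimal weight cannot cancel, because the initial forms of the
  generators start at pairwise distinct positions \<open>(lx t, ly t)\<close>.\<close>

lemma vplus_lincomb:
  fixes g :: "'t \<Rightarrow> bipoly" and \<phi> :: "'t \<Rightarrow> real" and lx ly :: "'t \<Rightarrow> nat"
  assumes T: "finite T" and f: "f = (\<Sum>t\<in>T. bconst (c t) * g t)" "f \<noteq> 0"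
    and ge: "\<And>t. t \<in> T \<Longrightarrow> weight_ge s (cseries xi (g t)) (\<phi> t)"
    and below: "\<And>t i j. t \<in> T \<Longrightarrow> j < ly t \<Longrightarrow> initial s (\<phi> t) (cseries xi (g t)) $ j $ i = 0"
    and lead: "\<And>t i. t \<in> T \<Longrightarrow> initial s (\<phi> t) (cseries xi (g t)) $ ly t $ i \<noteq> 0 \<longleftrightarrow> i = lx t"
    and inj: "inj_on (\<lambda>t. (lx t, ly t)) T"
  shows "\<exists>t\<in>T. c t \<noteq> 0 \<and> vplus xi s f = (\<phi> t, real (ly t))"
proof -
  define N where "N = {t\<in>T. c t \<noteq> 0}"
  define v0 where "v0 = Min (\<phi> ` N)"
  define S0 where "S0 = {t\<in>N. \<phi> t = v0}"
  define j0 where "j0 = Min (ly ` S0)"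
  define H where "H t = initial s (\<phi> t) (cseries xi (g t))" for t
  have "N \<noteq> {}"
  proof
    assume "N = {}"
    then have "f = 0"
      unfolding f N_def by (auto intro: sum.neutral)
    with f(2) show False ..
  qed
  moreover have finN: "finite N"
    using T by (simp add: N_def)
  ultimately have "v0 \<in> \<phi> ` N" and v0_le: "\<And>t. t \<in> N \<Longrightarrow> v0 \<le> \<phi> t"
    by (auto simp: v0_def)
  then have "S0 \<noteq> {}" and finS0: "finite S0"
    using finN by (auto simp: S0_def)
  then obtain t0 where t0: "t0 \<in> S0" "ly t0 = j0" and j0_le: "\<And>t. t \<in> S0 \<Longrightarrow> j0 \<le> ly t"
    unfolding j0_def by (metis (mono_tags, lifting) Min_in Min_le finite_imageI image_iff
        image_is_empty)
  have F: "cseries xi f = (\<Sum>t\<in>N. fps_const (fps_const (c t)) * cseries xi (g t))"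
    unfolding f N_def by (simp add: cseries_sum cseries_mult cseries_bconst sum.mono_neutral_cong_right T)
  have ge_f: "weight_ge s (cseries xi f) v0"
    unfolding F using ge v0_le
    by (intro weight_ge_sum weight_ge_scale) (auto simp: N_def intro: weight_ge_mono)
  have init_f: "initial s v0 (cseries xi f) = (\<Sum>t\<in>S0. fps_const (fps_const (c t)) * H t)"
  proof -
    have "initial s v0 (cseries xi (g t)) = 0" if "t \<in> N - S0" for t
      using that v0_le ge by (intro initial_eq_0) (auto simp: S0_def N_def less_le)
    then show ?thesis
      unfolding F initial_sum initial_scale H_def
      by (intro sum.mono_neutral_cong_right finN) (auto simp: S0_def)
  qed
  have "initial s v0 (cseries xi f) $ j0 $ lx t0 = c t0 * H t0 $ j0 $ lx t0"
  proof -
    have "H t $ j0 $ lx t0 = 0" if "t \<in> S0" "t \<noteq> t0" for t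
    proof (cases "ly t = j0")
      case True
      then have "lx t \<noteq> lx t0"
        using that t0 inj by (auto simp: S0_def N_def inj_on_def)
      then show ?thesis
        using lead[of t "lx t0"] that True by (auto simp: H_def S0_def N_def)
    next
      case False
      then show ?thesis
        using below[of t j0] j0_le[of t] that by (auto simp: H_def S0_def N_def)
    qed
    then show ?thesis
      unfolding init_f using finS0 t0(1) by (simp add: fps_sum_nth sum.remove)
  qed
  also have "\<dots> \<noteq> 0"
    using lead[of t0 "lx t0"] t0 by (auto simp: H_def S0_def N_def)
  finally have "vplus xi s f = (v0, real j0)"
  proof (rule vplus_eqI[OF ge_f])
    fix i j assume "j < j0"
    then show "initial s v0 (cseries xi f) $ j $ i = 0"
      unfolding init_f using below j0_le
      by (force simp: fps_sum_nth H_def S0_def N_def intro: sum.neutral)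
  qed
  then show ?thesis
    using t0 by (auto simp: S0_def N_def)
qed

lemma weight_ge_X: "weight_ge s (fps_const fps_X) 1"
  unfolding weight_ge_def by auto

lemma initial_X: "initial s 1 (fps_const fps_X) = fps_const fps_X"
  by (intro fps_ext) (auto simp: initial_nth)

lemma X_power_Y_power_nth:
  "(fps_const (fps_X ^ a) * fps_X ^ b :: complex fps fps) $ j $ i = (if j = b \<and> i = a then 1 else 0)"
  by (simp add: fps_X_power_mult_right_nth)

section \<open>Slopes \<open>s < 2\<close>: monomials\<close>

definition mono_xy :: "nat \<times> nat \<Rightarrow> bipoly" where
  "mono_xy t = bX ^ fst t * bY ^ snd t"

lemma mono_xy_nonzero: "mono_xy t \<noteq> 0"
  by (simp add: mono_xy_def bX_def bY_def)

lemma tdeg_mono_xy: "tdeg (mono_xy (a, b)) \<le> a + b"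
proof -
  have "tdeg (mono_xy (a, b)) \<le> tdeg (bX ^ a) + tdeg (bY ^ b)"
    unfolding mono_xy_def by (simp add: tdeg_mult)
  also have "\<dots> \<le> a * tdeg bX + b * tdeg bY"
    by (intro add_mono tdeg_power)
  also have "\<dots> \<le> a + b"
    using tdeg_bX tdeg_bY by (simp add: add_mono)
  finally show ?thesis .
qed

lemma finite_pairs_sum_le: "finite {(a, b :: nat). a + b \<le> k}"
  by (rule finite_subset[of _ "{..k} \<times> {..k}"]) auto

lemma lincomb_of_mono_xy:
  assumes "tdeg f \<le> k"
  shows "lincomb_of mono_xy {(a, b). a + b \<le> k} f"
  using assms
proof (induction rule: tdeg_induct)
  case (const k c)
  have "lincomb_of mono_xy {(a, b). a + b \<le> k} (bconst c * mono_xy (0, 0))"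
    by (intro lincomb_of_scale lincomb_of_generator finite_pairs_sum_le) simp
  then show ?case by (simp add: mono_xy_def[of "(0, 0)"])
next
  case (mult_X k f)
  have "lincomb_of mono_xy {(a, b). a + b \<le> Suc k} (bX * mono_xy t)"
    if "t \<in> {(a, b). a + b \<le> k}" for t
  proof -
    have "bX * mono_xy t = mono_xy (Suc (fst t), snd t)"
      by (simp add: mono_xy_def mult.assoc)
    then show ?thesis
      using that by (auto intro: lincomb_of_generator[OF finite_pairs_sum_le])
  qed
  then show ?case
    by (rule lincomb_of_mult[OF finite_pairs_sum_le mult_X])
next
  case (mult_Y k f)
  have "lincomb_of mono_xy {(a, b). a + b \<le> Suc k} (bY * mono_xy t)"
    if "t \<in> {(a, b). a + b \<le> k}" for t
  proof -
    have "bY * mono_xy t = mono_xy (fst t, Suc (snd t))"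
      by (simp add: mono_xy_def mult.left_commute)
    then show ?thesis
      using that by (auto intro: lincomb_of_generator[OF finite_pairs_sum_le])
  qed
  then show ?case
    by (rule lincomb_of_mult[OF finite_pairs_sum_le mult_Y])
qed (rule lincomb_of_add)

lemma xi_nth_less_2: "xi $ 0 = 0 \<Longrightarrow> xi $ 1 = 0 \<Longrightarrow> i < 2 \<Longrightarrow> xi $ i = 0"
  by (cases i) (auto simp: less_2_cases_iff)

lemma y_series_weight_lt2:
  assumes s: "0 < s" "s < 2" and xi: "xi $ 0 = 0" "xi $ 1 = 0"
  shows "weight_ge s (y_series xi) s" "initial s s (y_series xi) = fps_X"
proof -
  show "weight_ge s (y_series xi) s"
    unfolding weight_ge_def
  proof (intro allI impI)
    fix i j assume lt: "real i + s * real j < s"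
    have "j = 0"
    proof (rule ccontr)
      assume "j \<noteq> 0"
      then have "s * 1 \<le> s * real j"
        using s by (intro mult_left_mono) auto
      with lt show False by simp
    qed
    with lt s show "y_series xi $ j $ i = 0"
      using xi_nth_less_2[OF xi, of i] by (simp add: y_series_nth)
  qed
  show "initial s s (y_series xi) = fps_X"
  proof (intro fps_ext)
    fix j i :: nat
    consider "j = 0" | "j = 1" | "j \<ge> 2" by linarith
    then show "initial s s (y_series xi) $ j $ i = fps_X $ j $ i"
    proof cases
      case 1
      have "real i = s \<Longrightarrow> xi $ i = 0"
        using s xi_nth_less_2[OF xi, of i] by (cases "i < 2") auto
      then show ?thesis
        using 1 by (simp add: initial_nth y_series_nth)
    qed (auto simp: initial_nth y_series_nth fps_X_nth)
  qed
qed

lemma cseries_mono_xy: "cseries xi (mono_xy (a, b)) = fps_const fps_X ^ a * y_series xi ^ b"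
  by (simp add: mono_xy_def cseries_mult cseries_power cseries_bX cseries_bY)

lemma initial_mono_xy_lt2:
  assumes "0 < s" "s < 2" "xi $ 0 = 0" "xi $ 1 = 0"
  shows "weight_ge s (cseries xi (mono_xy (a, b))) (real a + s * real b)"
    "initial s (real a + s * real b) (cseries xi (mono_xy (a, b))) = fps_const (fps_X ^ a) * fps_X ^ b"
proof -
  have s: "s \<ge> 0" using assms by simp
  note X = weight_ge_power[OF s weight_ge_X, of a]
    and Y = weight_ge_power[OF s y_series_weight_lt2(1)[OF assms], of b]
  have w: "real a + s * real b = real a * 1 + real b * s" by simp
  show "weight_ge s (cseries xi (mono_xy (a, b))) (real a + s * real b)"
    unfolding cseries_mono_xy w by (rule weight_ge_mult[OF X Y])
  show "initial s (real a + s * real b) (cseries xi (mono_xy (a, b))) = fps_const (fps_X ^ a) * fps_X ^ b"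
    unfolding cseries_mono_xy w initial_mult[OF X Y]
      initial_power[OF s weight_ge_X] initial_power[OF s y_series_weight_lt2(1)[OF assms]]
    by (simp add: initial_X y_series_weight_lt2(2)[OF assms] fps_const_power)
qed

lemma vplus_lincomb_mono_xy:
  assumes s: "0 < s" "s < 2" and xi: "xi $ 0 = 0" "xi $ 1 = 0"
    and f: "finite T" "f = (\<Sum>t\<in>T. bconst (c t) * mono_xy t)" "f \<noteq> 0"
  shows "\<exists>a b. (a, b) \<in> T \<and> vplus xi s f = (real a + s * real b, real b)"
proof -
  have "\<exists>t\<in>T. c t \<noteq> 0 \<and> vplus xi s f = ((\<lambda>(a, b). real a + s * real b) t, real (snd t))"
  proof (rule vplus_lincomb[OF f, where lx = fst])
    fix t i j
    show "weight_ge s (cseries xi (mono_xy t)) ((\<lambda>(a, b). real a + s * real b) t)"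
      using initial_mono_xy_lt2(1)[OF s xi] by (cases t) simp
    show "j < snd t \<Longrightarrow> initial s ((\<lambda>(a, b). real a + s * real b) t) (cseries xi (mono_xy t)) $ j $ i = 0"
      using initial_mono_xy_lt2(2)[OF s xi] by (cases t) (simp add: X_power_Y_power_nth)
    show "initial s ((\<lambda>(a, b). real a + s * real b) t) (cseries xi (mono_xy t)) $ snd t $ i \<noteq> 0
        \<longleftrightarrow> i = fst t"
      using initial_mono_xy_lt2(2)[OF s xi] by (cases t) (simp add: X_power_Y_power_nth)
  qed (simp add: inj_on_def)
  then show ?thesis
    by auto
qed

lemma vplus_lt2:
  assumes "0 < s" "s < 2" "xi $ 0 = 0" "xi $ 1 = 0" and f: "f \<noteq> 0" "tdeg f \<le> k"
  shows "\<exists>a b. a + b \<le> k \<and> vplus xi s f = (real a + s * real b, real b)"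
proof -
  obtain c where "f = (\<Sum>t\<in>{(a, b). a + b \<le> k}. bconst (c t) * mono_xy t)"
    using lincomb_of_mono_xy[OF f(2)] unfolding lincomb_of_def by blast
  from vplus_lincomb_mono_xy[OF assms(1-4) finite_pairs_sum_le this f(1)] show ?thesis
    by auto
qed

lemma vplus_mono_xy_lt2:
  assumes "0 < s" "s < 2" "xi $ 0 = 0" "xi $ 1 = 0"
  shows "vplus xi s (mono_xy (a, b)) = (real a + s * real b, real b)"
  using vplus_lincomb_mono_xy[OF assms, of "{(a, b)}" _ "\<lambda>_. 1"] mono_xy_nonzero by simp

section \<open>Slopes \<open>s \<ge> 2\<close>: reduction modulo the conic\<close>

text \<open>The hypotheses force \<open>Q = a\<^sub>2\<^sub>0 x\<^sup>2 + a\<^sub>0\<^sub>1 y + a\<^sub>1\<^sub>1 x y + a\<^sub>0\<^sub>2 y\<^sup>2\<close>.\<close>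

locale normal_conic =
  fixes Q :: bipoly and xi :: "complex fps" and a20 a01 a11 a02 :: complex
  assumes Q_eq: "Q = [:[:0, 0, a20:], [:a01, a11:], [:a02:]:]"
    and a20: "a20 \<noteq> 0" and a01: "a01 \<noteq> 0"
    and xi0: "xi $ 0 = 0" and xi1: "xi $ 1 = 0"
    and branch: "cseries xi Q $ 0 = 0"
begin

lemma cseries_Q:
  "cseries xi Q = fps_const (fps_of_poly [:0, 0, a20:])
     + y_series xi * (fps_const (fps_of_poly [:a01, a11:]) + y_series xi * fps_const (fps_of_poly [:a02:]))"
  unfolding Q_eq by (simp add: cseries_pCons cseries_const)

lemma cseries_Q_nth_1_0: "cseries xi Q $ 1 $ 0 = a01"
  unfolding cseries_Q using xi0 by (simp add: fps_mult_nth y_series_nth numeral_2_eq_2)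

text \<open>Comparing the coefficients of \<open>x\<^sup>2\<close> in \<open>Q(x, \<xi>(x)) = 0\<close> gives \<open>a\<^sub>2\<^sub>0 + a\<^sub>0\<^sub>1 \<xi>\<^sub>2 = 0\<close>.\<close>

lemma xi2: "xi $ 2 \<noteq> 0"
proof -
  have "cseries xi Q $ 0 $ 2 = a20 + xi $ 2 * a01"
    unfolding cseries_Q using xi0 xi1
    by (simp add: fps_mult_nth y_series_nth numeral_2_eq_2)
  then show ?thesis
    using branch a20 by auto
qed

lemma Q_nonzero: "Q \<noteq> 0"
  using a01 by (simp add: Q_eq)

lemma tdeg_Q: "tdeg Q \<le> 2"
  unfolding tdeg_le_iff Q_eq by (auto simp: coeff_pCons split: nat.splits)

definition mono_xyQ :: "nat \<times> nat \<times> nat \<Rightarrow> bipoly" where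
  "mono_xyQ t = (case t of (m, b, e) \<Rightarrow> bX ^ e * bY ^ b * Q ^ m)"

definition reduced_index :: "nat \<Rightarrow> (nat \<times> nat \<times> nat) set" where
  "reduced_index k = {(m, b, e). e \<le> 1 \<and> 2 * m + b + e \<le> k}"

lemma finite_reduced_index: "finite (reduced_index k)"
  unfolding reduced_index_def by (rule finite_subset[of _ "{..k} \<times> {..k} \<times> {..k}"]) auto

lemma mono_xyQ_nonzero: "mono_xyQ (m, b, e) \<noteq> 0"
  using Q_nonzero by (simp add: mono_xyQ_def bX_def bY_def)

lemma tdeg_mono_xyQ: "tdeg (mono_xyQ (m, b, e)) \<le> e + b + 2 * m"
proof -
  have "tdeg (mono_xyQ (m, b, e)) \<le> tdeg (bX ^ e * bY ^ b) + tdeg (Q ^ m)"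
    unfolding mono_xyQ_def by (simp add: tdeg_mult)
  also have "\<dots> \<le> (tdeg (bX ^ e) + tdeg (bY ^ b)) + tdeg (Q ^ m)"
    by (intro add_mono tdeg_mult order_refl)
  also have "\<dots> \<le> (e * tdeg bX + b * tdeg bY) + m * tdeg Q"
    by (intro add_mono tdeg_power)
  also have "\<dots> \<le> (e * 1 + b * 1) + m * 2"
    using tdeg_Q tdeg_bX tdeg_bY by (intro add_mono mult_left_mono) auto
  finally show ?thesis by simp
qed

lemma x_squared_mod_Q:
  "bX ^ 2 = bconst (1 / a20) * (Q - bconst a01 * bY - bconst a11 * bX * bY - bconst a02 * bY ^ 2)"
proof -
  have "Q - bconst a01 * bY - bconst a11 * bX * bY - bconst a02 * bY ^ 2 = bconst a20 * bX ^ 2"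
    unfolding Q_eq by (simp add: bconst_def bX_def bY_def power2_eq_square)
  then show ?thesis
    using a20 by (simp add: mult.assoc[symmetric] bconst_mult[symmetric])
qed

lemma lincomb_of_X_mono_xyQ:
  assumes "t \<in> reduced_index k"
  shows "lincomb_of mono_xyQ (reduced_index (Suc k)) (bX * mono_xyQ t)"
proof -
  obtain m b e where t: "t = (m, b, e)"
    by (cases t)
  have gen: "t' \<in> reduced_index (Suc k) \<Longrightarrow> lincomb_of mono_xyQ (reduced_index (Suc k)) (mono_xyQ t')"
    for t' by (rule lincomb_of_generator[OF finite_reduced_index])
  show ?thesis
  proof (cases "e = 0")
    case True
    then have "bX * mono_xyQ t = mono_xyQ (m, b, 1)"
      by (simp add: t mono_xyQ_def)
    then show ?thesis
      using assms gen by (auto simp: t True reduced_index_def)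
  next
    case False
    then have e: "e = 1"
      using assms by (simp add: t reduced_index_def)
    have "bX * mono_xyQ t = bX ^ 2 * bY ^ b * Q ^ m"
      by (simp add: t e mono_xyQ_def power2_eq_square algebra_simps)
    also have "\<dots> = bconst (1 / a20) * (mono_xyQ (Suc m, b, 0) - bconst a01 * mono_xyQ (m, Suc b, 0)
          - bconst a11 * mono_xyQ (m, Suc b, 1) - bconst a02 * mono_xyQ (m, b + 2, 0))"
      unfolding x_squared_mod_Q by (simp add: mono_xyQ_def algebra_simps power2_eq_square)
    also have "lincomb_of mono_xyQ (reduced_index (Suc k)) \<dots>"
      using assms unfolding t e
      by (intro lincomb_of_scale lincomb_of_diff gen) (auto simp: reduced_index_def)
    finally show ?thesis .
  qed
qed

lemma lincomb_of_mono_xyQ: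
  assumes "tdeg f \<le> k"
  shows "lincomb_of mono_xyQ (reduced_index k) f"
  using assms
proof (induction rule: tdeg_induct)
  case (const k c)
  have "lincomb_of mono_xyQ (reduced_index k) (bconst c * mono_xyQ (0, 0, 0))"
    by (intro lincomb_of_scale lincomb_of_generator finite_reduced_index)
      (simp add: reduced_index_def)
  then show ?case
    by (simp add: mono_xyQ_def[of "(0, 0, 0)"])
next
  case (mult_X k f)
  show ?case
    by (rule lincomb_of_mult[OF finite_reduced_index mult_X lincomb_of_X_mono_xyQ])
next
  case (mult_Y k f)
  have "lincomb_of mono_xyQ (reduced_index (Suc k)) (bY * mono_xyQ t)"
    if "t \<in> reduced_index k" for t
  proof -
    obtain m b e where t: "t = (m, b, e)"
      by (cases t)
    then have "bY * mono_xyQ t = mono_xyQ (m, Suc b, e)"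
      by (simp add: mono_xyQ_def algebra_simps)
    moreover have "(m, Suc b, e) \<in> reduced_index (Suc k)"
      using that t by (simp add: reduced_index_def)
    ultimately show ?thesis
      by (simp add: lincomb_of_generator[OF finite_reduced_index])
  qed
  then show ?case
    by (rule lincomb_of_mult[OF finite_reduced_index mult_Y])
qed (rule lincomb_of_add)

definition y_initial :: "real \<Rightarrow> complex fps fps" where
  "y_initial s = fps_const (fps_const (xi $ 2) * fps_X ^ 2) + (if s = 2 then fps_X else 0)"

lemma y_series_weight_ge2:
  assumes s: "s \<ge> 2"
  shows "weight_ge s (y_series xi) 2" "initial s 2 (y_series xi) = y_initial s"
proof -
  show "weight_ge s (y_series xi) 2"
    unfolding weight_ge_def
  proof (intro allI impI)
    fix i j assume lt: "real i + s * real j < 2"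
    have "j = 0"
    proof (rule ccontr)
      assume "j \<noteq> 0"
      then have "2 * 1 \<le> s * real j"
        using s by (intro mult_mono) auto
      with lt show False by simp
    qed
    with lt show "y_series xi $ j $ i = 0"
      using xi_nth_less_2[OF xi0 xi1, of i] by (simp add: y_series_nth)
  qed
  show "initial s 2 (y_series xi) = y_initial s"
  proof (intro fps_ext)
    fix j i :: nat
    have "real i + s * real j \<noteq> 2" if "j \<ge> 2"
    proof -
      have "s * 2 \<le> s * real j"
        using that s by (intro mult_left_mono) auto
      then show ?thesis
        using s by linarith
    qed
    then show "initial s 2 (y_series xi) $ j $ i = y_initial s $ j $ i"
      using s by (cases "j = 0"; cases "j = 1")
        (auto simp: initial_nth y_series_nth y_initial_def fps_X_power_mult_right_nth)
  qed
qed

lemma Q_weight: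
  assumes s: "s > 0"
  shows "weight_ge s (cseries xi Q) s"
    "initial s s (cseries xi Q) = fps_const (fps_const a01) * fps_X"
proof -
  have j1: "real i + s * real j \<noteq> s" if "j \<ge> 2" for i j
  proof -
    have "s * 2 \<le> s * real j"
      using that s by (intro mult_left_mono) auto
    then show ?thesis
      using s by linarith
  qed
  show "weight_ge s (cseries xi Q) s"
    unfolding weight_ge_def
  proof (intro allI impI)
    fix i j assume lt: "real i + s * real j < s"
    have "j = 0"
    proof (rule ccontr)
      assume "j \<noteq> 0"
      then have "s * 1 \<le> s * real j"
        using s by (intro mult_left_mono) auto
      with lt show False by simp
    qed
    then show "cseries xi Q $ j $ i = 0"
      using branch by simp
  qed
  show "initial s s (cseries xi Q) = fps_const (fps_const a01) * fps_X"
  proof (intro fps_ext)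
    fix j i :: nat
    show "initial s s (cseries xi Q) $ j $ i = (fps_const (fps_const a01) * fps_X) $ j $ i"
      using s j1[of j i] branch cseries_Q_nth_1_0
      by (cases "j = 0"; cases "j = 1") (auto simp: initial_nth)
  qed
qed

definition gen_initial :: "real \<Rightarrow> nat \<times> nat \<times> nat \<Rightarrow> complex fps fps" where
  "gen_initial s t = (case t of (m, b, e) \<Rightarrow>
     fps_const fps_X ^ e * y_initial s ^ b * (fps_const (fps_const a01) * fps_X) ^ m)"

lemma gen_initial_eq:
  obtains P where "gen_initial s (m, b, e) = P * fps_X ^ m"
    and "P $ 0 = fps_const (a01 ^ m * (xi $ 2) ^ b) * fps_X ^ (e + 2 * b)"
proof
  define P where "P = fps_const fps_X ^ e * y_initial s ^ b * fps_const (fps_const a01) ^ m"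
  show "gen_initial s (m, b, e) = P * fps_X ^ m"
    unfolding gen_initial_def P_def by (simp add: power_mult_distrib algebra_simps)
  show "P $ 0 = fps_const (a01 ^ m * (xi $ 2) ^ b) * fps_X ^ (e + 2 * b)"
  proof -
    have "P $ 0 = fps_const (a01 ^ m * (xi $ 2) ^ b) * (fps_X ^ e * (fps_X ^ 2) ^ b)"
      unfolding P_def
      by (simp add: fps_nth_power_0 y_initial_def power_mult_distrib algebra_simps)
    then show ?thesis
      by (simp add: power_add power_mult)
  qed
qed

lemma gen_initial_nth_below: "j < m \<Longrightarrow> gen_initial s (m, b, e) $ j $ i = 0"
  by (rule gen_initial_eq[of s m b e]) (simp add: fps_X_power_mult_right_nth)

lemma gen_initial_nth_row:
  "gen_initial s (m, b, e) $ m $ i = (if i = e + 2 * b then a01 ^ m * (xi $ 2) ^ b else 0)"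
  by (rule gen_initial_eq[of s m b e]) (simp add: fps_X_power_mult_right_nth)

lemma initial_mono_xyQ:
  assumes s: "s \<ge> 2"
  shows "weight_ge s (cseries xi (mono_xyQ (m, b, e))) (real e + 2 * real b + s * real m)"
    "initial s (real e + 2 * real b + s * real m) (cseries xi (mono_xyQ (m, b, e)))
       = gen_initial s (m, b, e)"
proof -
  have s0: "s \<ge> 0" "s > 0"
    using s by auto
  have cs: "cseries xi (mono_xyQ (m, b, e)) = fps_const fps_X ^ e * y_series xi ^ b * cseries xi Q ^ m"
    by (simp add: mono_xyQ_def cseries_mult cseries_power cseries_bX cseries_bY)
  note X = weight_ge_power[OF s0(1) weight_ge_X, of e]
    and Y = weight_ge_power[OF s0(1) y_series_weight_ge2(1)[OF s], of b]
    and QQ = weight_ge_power[OF s0(1) Q_weight(1)[OF s0(2)], of m]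
  note XY = weight_ge_mult[OF X Y]
  have w: "real e + 2 * real b + s * real m = (real e * 1 + real b * 2) + real m * s"
    by simp
  show "weight_ge s (cseries xi (mono_xyQ (m, b, e))) (real e + 2 * real b + s * real m)"
    unfolding cs w by (rule weight_ge_mult[OF XY QQ])
  show "initial s (real e + 2 * real b + s * real m) (cseries xi (mono_xyQ (m, b, e)))
      = gen_initial s (m, b, e)"
    unfolding cs w initial_mult[OF XY QQ] initial_mult[OF X Y]
      initial_power[OF s0(1) weight_ge_X] initial_power[OF s0(1) y_series_weight_ge2(1)[OF s]]
      initial_power[OF s0(1) Q_weight(1)[OF s0(2)]]
    by (simp add: initial_X y_series_weight_ge2(2)[OF s] Q_weight(2)[OF s0(2)] gen_initial_def)
qed

lemma vplus_lincomb_mono_xyQ: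
  assumes s: "s \<ge> 2" and T: "T \<subseteq> {(m, b, e). e \<le> 1}"
    and f: "finite T" "f = (\<Sum>t\<in>T. bconst (c t) * mono_xyQ t)" "f \<noteq> 0"
  shows "\<exists>m b e. (m, b, e) \<in> T \<and> vplus xi s f = (real e + 2 * real b + s * real m, real m)"
proof -
  let ?\<phi> = "\<lambda>(m, b, e). real e + 2 * real b + s * real m"
  have "\<exists>t\<in>T. c t \<noteq> 0 \<and> vplus xi s f = (?\<phi> t, real (fst t))"
  proof (rule vplus_lincomb[OF f, where lx = "\<lambda>(m, b, e). e + 2 * b"])
    fix t i j
    show "weight_ge s (cseries xi (mono_xyQ t)) (?\<phi> t)"
      using initial_mono_xyQ(1)[OF s] by (cases t) simp
    show "j < fst t \<Longrightarrow> initial s (?\<phi> t) (cseries xi (mono_xyQ t)) $ j $ i = 0"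
      using initial_mono_xyQ(2)[OF s] gen_initial_nth_below by (cases t) simp
    show "initial s (?\<phi> t) (cseries xi (mono_xyQ t)) $ fst t $ i \<noteq> 0
        \<longleftrightarrow> i = (\<lambda>(m, b, e). e + 2 * b) t"
      using initial_mono_xyQ(2)[OF s] gen_initial_nth_row a01 xi2 by (cases t) simp
  next
    show "inj_on (\<lambda>t. ((\<lambda>(m, b, e). e + 2 * b) t, fst t)) T"
    proof (rule inj_onI)
      fix t t' assume "t \<in> T" "t' \<in> T"
        and eq: "((\<lambda>(m, b, e). e + 2 * b) t, fst t) = ((\<lambda>(m, b, e). e + 2 * b) t', fst t')"
      moreover obtain m b e m' b' e' where "t = (m, b, e)" "t' = (m', b', e')"
        by (cases t, cases t')
      ultimately have "e \<le> 1" "e' \<le> 1" "e + 2 * b = e' + 2 * b'" "m = m'"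
        using T by auto
      then have "e = e' \<and> b = b'"
        by presburger
      then show "t = t'"
        using \<open>t = (m, b, e)\<close> \<open>t' = (m', b', e')\<close> \<open>m = m'\<close> by simp
    qed
  qed
  then show ?thesis
    by fastforce
qed

lemma vplus_ge2:
  assumes "s \<ge> 2" and f: "f \<noteq> 0" "tdeg f \<le> k"
  shows "\<exists>m b e. e \<le> 1 \<and> 2 * m + b + e \<le> k
           \<and> vplus xi s f = (real e + 2 * real b + s * real m, real m)"
proof -
  obtain c where "f = (\<Sum>t\<in>reduced_index k. bconst (c t) * mono_xyQ t)"
    using lincomb_of_mono_xyQ[OF f(2)] unfolding lincomb_of_def by blast
  from vplus_lincomb_mono_xyQ[OF assms(1) _ finite_reduced_index this f(1)] show ?thesis
    by (auto simp: reduced_index_def)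
qed

lemma vplus_mono_xyQ_ge2:
  assumes "s \<ge> 2" "e \<le> 1"
  shows "vplus xi s (mono_xyQ (m, b, e)) = (real e + 2 * real b + s * real m, real m)"
  using vplus_lincomb_mono_xyQ[OF assms(1), of "{(m, b, e)}" _ "\<lambda>_. 1"] assms(2)
    mono_xyQ_nonzero by simp

end

lemma poly_degree_le_2_eq: "degree p \<le> 2 \<Longrightarrow> p = [:coeff p 0, coeff p 1, coeff p 2:]"
  by (rule poly_eqI) (auto simp: coeff_pCons coeff_eq_0 numeral_2_eq_2 split: nat.split)

lemma normal_conicI:
  fixes Q :: bipoly and xi :: "complex fps"
  assumes conic: "tdeg Q = 2" and irred: "irreducible Q"
    and through_O: "val_O Q = 0" and smooth_O: "dy_O Q \<noteq> 0" and tangent: "dx_O Q = 0"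
    and xi0: "xi $ 0 = 0" and xi1: "xi $ 1 = 0" and branch: "subst_branch xi Q = 0"
  shows "normal_conic Q xi (poly.coeff (coeff Q 0) 2) (dy_O Q)
           (poly.coeff (coeff Q 1) 1) (poly.coeff (coeff Q 2) 0)"
proof -
  define a20 a01 a11 a02 where "a20 = poly.coeff (coeff Q 0) 2" and "a01 = dy_O Q"
    and "a11 = poly.coeff (coeff Q 1) 1" and "a02 = poly.coeff (coeff Q 2) 0"
  have deg: "coeff Q q \<noteq> 0 \<Longrightarrow> degree (coeff Q q) + q \<le> 2" for q
    using tdeg_ge[of Q q] conic by simp
  have "coeff Q 0 = [:0, 0, a20:]"
    using poly_degree_le_2_eq[of "coeff Q 0"] deg[of 0] through_O tangent
    by (cases "coeff Q 0 = 0") (auto simp: val_O_def dx_O_def a20_def)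
  moreover have "coeff Q 1 = [:a01, a11:]"
    using poly_degree_le_2_eq[of "coeff Q 1"] deg[of 1] coeff_eq_0[of "coeff Q 1" 2]
    by (cases "coeff Q 1 = 0") (auto simp: dy_O_def a01_def a11_def)
  moreover have "coeff Q 2 = [:a02:]"
    using deg[of 2] by (cases "coeff Q 2 = 0") (auto simp: a02_def degree_0_id)
  moreover have "degree Q \<le> 2"
    using deg by (intro degree_le) force
  ultimately have Q_eq: "Q = [:[:0, 0, a20:], [:a01, a11:], [:a02:]:]"
    using poly_degree_le_2_eq[of Q] by simp
  have a20: "a20 \<noteq> 0"
  proof
    assume a20: "a20 = 0"
    have "Q = bY * [:[:a01, a11:], [:a02:]:]"
      unfolding Q_eq a20 by (simp add: bY_def)
    moreover have "\<not> is_unit bY"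
      by (auto simp: bY_def is_unit_poly_iff)
    ultimately obtain c where c: "[:[:a01, a11:], [:a02:]:] = [:c:]" "is_unit c"
      using irreducibleD[OF irred] is_unit_poly_iff by metis
    then have "a02 = 0" "a11 = 0"
      by (auto simp: is_unit_poly_iff)
    then have "Q = [:0, [:a01:]:]"
      using Q_eq a20 by simp
    then have "tdeg Q \<le> 1"
      unfolding tdeg_le_iff by (auto simp: coeff_pCons split: nat.splits)
    with conic show False by simp
  qed
  show ?thesis
    unfolding a20_def[symmetric] a01_def[symmetric] a11_def[symmetric] a02_def[symmetric]
    using Q_eq a20 smooth_O xi0 xi1 branch
    by unfold_locales (auto simp: a01_def subst_branch_eq)
qed

lemma mem_triangle_iff:
  "p \<in> triangle a b c \<longleftrightarrow> (\<exists>u w. u \<ge> 0 \<and> w \<ge> 0 \<and> u + w \<le> 1 \<and> p = (u * a + w * b, w * c))"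
proof -
  have "p \<in> triangle a b c \<longleftrightarrow> (\<exists>v u w. 0 \<le> v \<and> 0 \<le> u \<and> 0 \<le> w \<and> v + u + w = 1 \<and>
           p = v *\<^sub>R (0, 0) + u *\<^sub>R (a, 0) + w *\<^sub>R (b, c))"
    unfolding triangle_def convex_hull_3 by blast
  also have "\<dots> \<longleftrightarrow> (\<exists>u w. u \<ge> 0 \<and> w \<ge> 0 \<and> u + w \<le> 1 \<and> p = (u * a + w * b, w * c))"
  proof
    assume "\<exists>v u w. 0 \<le> v \<and> 0 \<le> u \<and> 0 \<le> w \<and> v + u + w = 1 \<and>
      p = v *\<^sub>R (0, 0) + u *\<^sub>R (a, 0) + w *\<^sub>R (b, c)"
    then show "\<exists>u w. u \<ge> 0 \<and> w \<ge> 0 \<and> u + w \<le> 1 \<and> p = (u * a + w * b, w * c)"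
      by force
  next
    assume "\<exists>u w. u \<ge> 0 \<and> w \<ge> 0 \<and> u + w \<le> 1 \<and> p = (u * a + w * b, w * c)"
    then obtain u w where "u \<ge> 0" "w \<ge> 0" "u + w \<le> 1" "p = (u * a + w * b, w * c)"
      by blast
    then show "\<exists>v u w. 0 \<le> v \<and> 0 \<le> u \<and> 0 \<le> w \<and> v + u + w = 1 \<and>
        p = v *\<^sub>R (0, 0) + u *\<^sub>R (a, 0) + w *\<^sub>R (b, c)"
      by (intro exI[of _ "1 - u - w"] exI[of _ u] exI[of _ w]) auto
  qed
  finally show ?thesis .
qed

lemma closed_triangle: "closed (triangle a b c)"
  unfolding triangle_def by (intro compact_imp_closed finite_imp_compact_convex_hull) simp

lemma convex_triangle: "convex (triangle a b c)"
  unfolding triangle_def by simp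

lemma triangle_vertices: "(0, 0) \<in> triangle a b c" "(a, 0) \<in> triangle a b c" "(b, c) \<in> triangle a b c"
  unfolding triangle_def by (auto intro: hull_inc)

lemma extreme_point_of_triangle: "v extreme_point_of triangle a b c \<Longrightarrow> v \<in> {(0, 0), (a, 0), (b, c)}"
  unfolding triangle_def by (rule extreme_point_of_convex_hull)

lemma apex_extreme_point_of_triangle:
  assumes "c \<noteq> 0"
  shows "(b, c) extreme_point_of triangle a b c"
proof -
  have "convex hull {(0, 0), (a, 0)} \<subseteq> {p :: real \<times> real. snd p = 0}"
    by (rule hull_minimal) (auto simp: convex_def)
  then have "(b, c) \<notin> convex hull {(0, 0), (a, 0)}"
    using assms by auto
  then have "(b, c) extreme_point_of convex hull (insert (b, c) {(0, 0), (a, 0)})"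
    by (intro extreme_point_of_convex_hull_insert) auto
  then show ?thesis
    unfolding triangle_def by (simp add: insert_commute)
qed

lemma snd_le_triangle: "p \<in> triangle a b c \<Longrightarrow> c \<ge> 0 \<Longrightarrow> snd p \<le> c"
  unfolding mem_triangle_iff by (auto simp: mult_left_le_one_le)

lemma fst_le_triangle:
  assumes "p \<in> triangle a b c" "a \<ge> 0" "b \<ge> 0"
  shows "fst p \<le> max a b"
proof -
  obtain u w where uw: "u \<ge> 0" "w \<ge> 0" "u + w \<le> 1" "p = (u * a + w * b, w * c)"
    using assms(1) unfolding mem_triangle_iff by blast
  have "u * a + w * b \<le> (u + w) * max a b"
    using uw by (simp add: distrib_right add_mono mult_left_mono)
  also have "\<dots> \<le> max a b"
    using uw assms by (simp add: mult_left_le_one_le)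
  finally show ?thesis
    using uw by simp
qed

lemma triangle_vertices_frontier:
  assumes a: "a > 0" and b: "b \<ge> 0" and c: "c > 0"
  shows "(0, 0) \<in> frontier (triangle a b c)" "(a, 0) \<in> frontier (triangle a b c)"
    "(b, c) \<in> frontier (triangle a b c)"
proof -
  have frontierI: "v \<in> frontier (triangle a b c)"
    if "v \<in> triangle a b c" and "\<And>e. e > 0 \<Longrightarrow> \<exists>x. x \<notin> triangle a b c \<and> dist v x < e" for v
    unfolding frontier_straddle using that by force
  show "(0, 0) \<in> frontier (triangle a b c)"
  proof (rule frontierI[OF triangle_vertices(1)])
    fix e :: real assume e: "e > 0"
    have "(- e / 2, 0) \<notin> triangle a b c"
    proof
      assume "(- e / 2, 0) \<in> triangle a b c"
      then obtain u w where "u \<ge> 0" "w \<ge> 0" "- e / 2 = u * a + w * b"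
        unfolding mem_triangle_iff by auto
      moreover have "u * a \<ge> 0" "w * b \<ge> 0"
        using calculation a b by simp_all
      ultimately show False
        using e by linarith
    qed
    moreover have "dist (0, 0) (- e / 2, 0 :: real) < e"
      using e by (simp add: dist_Pair_Pair)
    ultimately show "\<exists>x. x \<notin> triangle a b c \<and> dist (0, 0) x < e"
      by blast
  qed
  show "(a, 0) \<in> frontier (triangle a b c)"
  proof (rule frontierI[OF triangle_vertices(2)])
    fix e :: real assume e: "e > 0"
    have "(a + e / 2, 0) \<notin> triangle a b c"
    proof
      assume "(a + e / 2, 0) \<in> triangle a b c"
      then obtain u w where uw: "u \<ge> 0" "w \<ge> 0" "u + w \<le> 1" "a + e / 2 = u * a + w * b" "w * c = 0"
        unfolding mem_triangle_iff by auto
      then have "w = 0"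
        using c by simp
      then have "a + e / 2 \<le> a"
        using uw a by (simp add: mult_left_le_one_le)
      then show False
        using e by linarith
    qed
    moreover have "dist (a, 0) (a + e / 2, 0 :: real) < e"
      using e by (simp add: dist_Pair_Pair dist_real_def)
    ultimately show "\<exists>x. x \<notin> triangle a b c \<and> dist (a, 0) x < e"
      by blast
  qed
  show "(b, c) \<in> frontier (triangle a b c)"
  proof (rule frontierI[OF triangle_vertices(3)])
    fix e :: real assume e: "e > 0"
    have "(b, c + e / 2) \<notin> triangle a b c"
    proof
      assume "(b, c + e / 2) \<in> triangle a b c"
      then have "c + e / 2 \<le> c"
        using snd_le_triangle c by fastforce
      then show False
        using e by linarith
    qed
    moreover have "dist (b, c) (b, c + e / 2) < e"
      using e by (simp add: dist_Pair_Pair dist_real_def)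
    ultimately show "\<exists>x. x \<notin> triangle a b c \<and> dist (b, c) x < e"
      by blast
  qed
qed

definition vplus_points :: "complex fps \<Rightarrow> real \<Rightarrow> (real \<times> real) set" where
  "vplus_points xi s = {scaleR (1 / real k) (vplus xi s f) | k f. k \<ge> 1 \<and> f \<noteq> 0 \<and> tdeg f \<le> k}"

lemma vplus_pointsI:
  "k \<ge> 1 \<Longrightarrow> f \<noteq> 0 \<Longrightarrow> tdeg f \<le> k \<Longrightarrow> scaleR (1 / real k) (vplus xi s f) \<in> vplus_points xi s"
  unfolding vplus_points_def by blast

lemma Delta_plus_eq_triangleI:
  assumes "vplus_points xi s \<subseteq> triangle a b c" "{(0, 0), (a, 0), (b, c)} \<subseteq> vplus_points xi s"
  shows "Delta_plus xi s = triangle a b c"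
proof
  have "convex hull vplus_points xi s \<subseteq> triangle a b c"
    using assms(1) convex_triangle by (intro hull_minimal)
  then show "Delta_plus xi s \<subseteq> triangle a b c"
    unfolding Delta_plus_def vplus_points_def[symmetric]
    using closed_triangle by (intro closure_minimal)
  have "triangle a b c \<subseteq> convex hull vplus_points xi s"
    unfolding triangle_def using assms(2) by (rule hull_mono)
  then show "triangle a b c \<subseteq> Delta_plus xi s"
    unfolding Delta_plus_def vplus_points_def[symmetric] using closure_subset by blast
qed

lemma Delta_plus_lt2:
  assumes s: "0 < s" "s < 2" and xi: "xi $ 0 = 0" "xi $ 1 = 0"
  shows "Delta_plus xi s = triangle 1 s 1"
proof (rule Delta_plus_eq_triangleI)
  show "vplus_points xi s \<subseteq> triangle 1 s 1"
  proof
    fix p assume "p \<in> vplus_points xi s"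
    then obtain k f where p: "p = scaleR (1 / real k) (vplus xi s f)"
      and k: "k \<ge> 1" and f: "f \<noteq> 0" "tdeg f \<le> k"
      unfolding vplus_points_def by blast
    obtain a b where ab: "a + b \<le> k" "vplus xi s f = (real a + s * real b, real b)"
      using vplus_lt2[OF s xi f] by blast
    have "real a / real k + real b / real k \<le> 1"
      using ab(1) k by (simp add: divide_le_eq_1 flip: add_divide_distrib)
    moreover have "p = (real a / real k * 1 + real b / real k * s, real b / real k * 1)"
      unfolding p ab(2) using k by (simp add: field_simps)
    ultimately show "p \<in> triangle 1 s 1"
      unfolding mem_triangle_iff by (intro exI conjI) auto
  qed
  have vertex: "scaleR (1 / real 1) (vplus xi s (mono_xy (a, b))) \<in> vplus_points xi s"
    if "a + b \<le> 1" for a b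
    using that mono_xy_nonzero tdeg_mono_xy[of a b] by (intro vplus_pointsI) auto
  then show "{(0, 0), (1, 0), (s, 1)} \<subseteq> vplus_points xi s"
    using vertex[of 0 0] vertex[of 1 0] vertex[of 0 1] vplus_mono_xy_lt2[OF s xi] by auto
qed

context normal_conic
begin

lemma Delta_plus_ge2:
  assumes s: "s \<ge> 2"
  shows "Delta_plus xi s = triangle 2 (s / 2) (1 / 2)"
proof (rule Delta_plus_eq_triangleI)
  show "vplus_points xi s \<subseteq> triangle 2 (s / 2) (1 / 2)"
  proof
    fix p assume "p \<in> vplus_points xi s"
    then obtain k f where p: "p = scaleR (1 / real k) (vplus xi s f)"
      and k: "k \<ge> 1" and f: "f \<noteq> 0" "tdeg f \<le> k"
      unfolding vplus_points_def by blast
    obtain m b e where mbe: "e \<le> 1" "2 * m + b + e \<le> k"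
      "vplus xi s f = (real e + 2 * real b + s * real m, real m)"
      using vplus_ge2[OF s f] by blast
    have "real e + 2 * real b + 4 * real m \<le> 2 * real k"
      using mbe(1,2) by linarith
    then have "(real e + 2 * real b) / (2 * real k) + 2 * real m / real k \<le> 1"
      using k by (simp add: field_simps)
    moreover have "p = ((real e + 2 * real b) / (2 * real k) * 2 + 2 * real m / real k * (s / 2),
        2 * real m / real k * (1 / 2))"
      unfolding p mbe(3) using k by (simp add: field_simps)
    ultimately show "p \<in> triangle 2 (s / 2) (1 / 2)"
      unfolding mem_triangle_iff by (intro exI conjI) auto
  qed
  have vertex: "scaleR (1 / real k) (vplus xi s (mono_xyQ (m, b, 0))) \<in> vplus_points xi s"
    if "b + 2 * m \<le> k" "k \<ge> 1" for m b k
    using that mono_xyQ_nonzero tdeg_mono_xyQ[of m b 0] by (intro vplus_pointsI) auto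
  show "{(0, 0), (2, 0), (s / 2, 1 / 2)} \<subseteq> vplus_points xi s"
    using vertex[where m = 0 and b = 0 and k = 1] vertex[where m = 0 and b = 1 and k = 1]
      vertex[where m = 1 and b = 0 and k = 2] vplus_mono_xyQ_ge2[OF s, of 0]
    by auto
qed

lemma Delta_plus_conic:
  assumes "s > 0"
  shows "Delta_plus xi s = (if s < 2 then triangle 1 s 1 else triangle 2 (s / 2) (1 / 2))"
  using assms Delta_plus_lt2[OF _ _ xi0 xi1] Delta_plus_ge2 by auto

end

section \<open>The invariant \<open>\<mu>\<close>\<close>

lemma v1_le_of_Delta_plus:
  assumes D: "Delta_plus xi s = triangle a b c" and ab: "a \<ge> 0" "b \<ge> 0"
    and k: "k \<ge> 1" and f: "f \<noteq> 0" "tdeg f \<le> k"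
  shows "v1 xi s f \<le> max a b * real k"
proof -
  have "vplus_points xi s \<subseteq> Delta_plus xi s"
    unfolding Delta_plus_def vplus_points_def[symmetric]
    by (meson closure_subset hull_subset subset_trans)
  then have "scaleR (1 / real k) (vplus xi s f) \<in> triangle a b c"
    using vplus_pointsI[OF k f] D by blast
  then have "fst (scaleR (1 / real k) (vplus xi s f)) \<le> max a b"
    using ab by (rule fst_le_triangle)
  then have "v1 xi s f / real k \<le> max a b"
    by (simp add: vplus_def)
  then show ?thesis
    using k by (simp add: divide_le_eq)
qed

lemma muhat_eqI:
  assumes upper: "\<And>k f. k \<ge> 1 \<Longrightarrow> f \<noteq> 0 \<Longrightarrow> tdeg f \<le> k \<Longrightarrow> v1 xi s f \<le> M * real k"
    and lower: "\<And>k. k \<ge> 1 \<Longrightarrow> \<exists>f. f \<noteq> 0 \<and> tdeg f \<le> k \<and> M * real k - C \<le> v1 xi s f"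
  shows "muhat xi s = M"
proof -
  define A where "A k = {v1 xi s f | f. f \<noteq> 0 \<and> tdeg f \<le> k}" for k
  define g where "g k = (1 / real k) * Sup (A k)" for k
  have bounds: "M - C / real k \<le> g k \<and> g k \<le> M" if k: "k \<ge> 1" for k
  proof -
    obtain f where f: "f \<noteq> 0" "tdeg f \<le> k" "M * real k - C \<le> v1 xi s f"
      using lower[OF k] by blast
    have "A k \<noteq> {}"
      using f unfolding A_def by blast
    then have "Sup (A k) \<le> M * real k"
      by (rule cSup_least) (auto simp: A_def intro: upper[OF k])
    moreover have "M * real k - C \<le> Sup (A k)"
      using f upper[OF k] by (intro cSup_upper2[of "v1 xi s f"]) (auto simp: A_def bdd_above_def)
    then have "(M * real k - C) / real k \<le> Sup (A k) / real k"
      by (rule divide_right_mono) simp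
    moreover from \<open>Sup (A k) \<le> M * real k\<close> have "Sup (A k) / real k \<le> M * real k / real k"
      by (rule divide_right_mono) simp
    ultimately show ?thesis
      using k by (simp add: g_def diff_divide_distrib)
  qed
  have "g \<longlonglongrightarrow> M"
  proof (rule real_tendsto_sandwich)
    show "\<forall>\<^sub>F k in sequentially. M - C / real k \<le> g k" "\<forall>\<^sub>F k in sequentially. g k \<le> M"
      using bounds by (auto intro: eventually_sequentiallyI[of 1])
    show "(\<lambda>k. M - C / real k) \<longlonglongrightarrow> M"
      using tendsto_diff[OF tendsto_const lim_const_over_n[of C]] by simp
  qed simp
  then show ?thesis
    unfolding muhat_def g_def A_def by (rule limI)
qed

definition mu_conic :: "real \<Rightarrow> real" where
  "mu_conic s = (if s < 2 then s else max 2 (s / 2))"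

context normal_conic
begin

lemma v1_Y_power_lt2: "0 < s \<Longrightarrow> s < 2 \<Longrightarrow> v1 xi s (mono_xy (0, k)) = s * real k"
  using vplus_mono_xy_lt2[OF _ _ xi0 xi1, of s 0 k] by (simp add: vplus_def)

lemma v1_mono_xyQ_ge2: "s \<ge> 2 \<Longrightarrow> v1 xi s (mono_xyQ (m, b, 0)) = 2 * real b + s * real m"
  using vplus_mono_xyQ_ge2[of s 0 m b] by (simp add: vplus_def)

lemma muhat_conic:
  assumes s: "s \<ge> 1"
  shows "muhat xi s = mu_conic s"
proof (rule muhat_eqI[where C = s])
  fix k f assume kf: "k \<ge> 1" "f \<noteq> 0" "tdeg f \<le> k"
  show "v1 xi s f \<le> mu_conic s * real k"
  proof (cases "s < 2")
    case True
    have "v1 xi s f \<le> max 1 s * real k"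
      using Delta_plus_lt2[OF _ True xi0 xi1] s by (intro v1_le_of_Delta_plus kf) auto
    then show ?thesis
      using True s by (simp add: mu_conic_def)
  next
    case False
    have "v1 xi s f \<le> max 2 (s / 2) * real k"
      using Delta_plus_ge2 False by (intro v1_le_of_Delta_plus kf) auto
    then show ?thesis
      using False by (simp add: mu_conic_def)
  qed
next
  fix k :: nat assume k: "k \<ge> 1"
  consider "s < 2" | "2 \<le> s" "s \<le> 4" | "s > 4" by linarith
  then show "\<exists>f. f \<noteq> 0 \<and> tdeg f \<le> k \<and> mu_conic s * real k - s \<le> v1 xi s f"
  proof cases
    case 1
    then show ?thesis
      using s mono_xy_nonzero tdeg_mono_xy[of 0 k] v1_Y_power_lt2[of s k]
      by (intro exI[of _ "mono_xy (0, k)"]) (auto simp: mu_conic_def)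
  next
    case 2
    then show ?thesis
      using mono_xyQ_nonzero tdeg_mono_xyQ[of 0 k 0] v1_mono_xyQ_ge2[of s 0 k]
      by (intro exI[of _ "mono_xyQ (0, k, 0)"]) (auto simp: mu_conic_def)
  next
    case 3
    define m where "m = k div 2"
    have "real k \<le> 2 * real m + 1"
      unfolding m_def by linarith
    then have "s / 2 * real k \<le> s / 2 * (2 * real m + 1)"
      using 3 by (intro mult_left_mono) auto
    then have "s / 2 * real k - s \<le> s * real m"
      using 3 by (simp add: algebra_simps)
    moreover have "tdeg (mono_xyQ (m, 0, 0)) \<le> k"
      using tdeg_mono_xyQ[of m 0 0] unfolding m_def by linarith
    ultimately show ?thesis
      using 3 mono_xyQ_nonzero v1_mono_xyQ_ge2[of s m 0]
      by (intro exI[of _ "mono_xyQ (m, 0, 0)"]) (simp add: mu_conic_def)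
  qed
qed

end

lemma mu_conic_eq_sqrt_iff:
  assumes s: "s \<ge> 1"
  shows "mu_conic s = sqrt s \<longleftrightarrow> s = 1 \<or> s = 4"
proof -
  have sqrt_iff: "y = sqrt s \<longleftrightarrow> y * y = s" if "y \<ge> 0" for y
    using s that real_sqrt_unique[of y s] by (auto simp: power2_eq_square)
  consider "s < 2" | "2 \<le> s" "s \<le> 4" | "s > 4" by linarith
  then show ?thesis
  proof cases
    case 1
    then show ?thesis
      using s sqrt_iff[of s] by (simp add: mu_conic_def mult_cancel_right2)
  next
    case 2
    then have "mu_conic s = 2"
      by (simp add: mu_conic_def max_def)
    then show ?thesis
      using 2 sqrt_iff[of 2] by auto
  next
    case 3
    have "s / 2 * (s / 2) \<noteq> s"
    proof
      assume "s / 2 * (s / 2) = s"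
      then have "(s / 4) * s = 1 * s"
        by simp
      then show False
        using 3 by (simp only: mult_right_cancel)
    qed
    moreover have "mu_conic s = s / 2"
      using 3 by (simp add: mu_conic_def max_def)
    ultimately show ?thesis
      using 3 sqrt_iff[of "s / 2"] by auto
  qed
qed

section \<open>Mutations\<close>

lemma Delta_continuous_at_triangleI:
  fixes g :: "real \<Rightarrow> real"
  assumes U: "open U" "s0 \<in> U" and D: "\<And>s. s \<in> U \<Longrightarrow> Delta_plus xi s = triangle a (g s) c"
    and a: "a > 0" and c: "c > 0" and g: "g s0 \<ge> 0" "continuous (at s0) g"
  shows "Delta_continuous_at xi s0"
  unfolding Delta_continuous_at_def
proof (intro allI impI)
  fix \<epsilon> :: real assume "\<epsilon> > 0"
  then obtain \<delta>1 where "\<delta>1 > 0" and \<delta>1: "\<And>s. dist s s0 < \<delta>1 \<Longrightarrow> dist (g s) (g s0) < \<epsilon>"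
    using g(2) unfolding continuous_at_eps_delta by blast
  obtain \<delta>2 where "\<delta>2 > 0" and \<delta>2: "ball s0 \<delta>2 \<subseteq> U"
    using U by (rule openE)
  have D0: "Delta_plus xi s0 = triangle a (g s0) c"
    using D U(2) .
  note frontier = triangle_vertices_frontier[OF a g(1) c]
  show "\<exists>\<delta>>0. \<forall>s\<in>\<rat>. \<bar>s - s0\<bar> < \<delta> \<longrightarrow>
      (\<forall>v. v extreme_point_of Delta_plus xi s \<longrightarrow> infdist v (frontier (Delta_plus xi s0)) < \<epsilon>)"
  proof (intro exI[of _ "min \<delta>1 \<delta>2"] conjI ballI impI allI)
    show "min \<delta>1 \<delta>2 > 0"
      using \<open>\<delta>1 > 0\<close> \<open>\<delta>2 > 0\<close> by simp
    fix s v assume "\<bar>s - s0\<bar> < min \<delta>1 \<delta>2" and v: "v extreme_point_of Delta_plus xi s"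
    then have "s \<in> U" and close: "dist (g s) (g s0) < \<epsilon>"
      using \<delta>1 \<delta>2 by (auto simp: dist_real_def)
    then have "v \<in> {(0, 0), (a, 0), (g s, c)}"
      using v D by (auto dest: extreme_point_of_triangle)
    moreover have "infdist (g s, c) (frontier (Delta_plus xi s0)) < \<epsilon>"
      using infdist_le[OF frontier(3), of "(g s, c)"] close
      by (simp add: D0 dist_Pair_Pair)
    ultimately show "infdist v (frontier (Delta_plus xi s0)) < \<epsilon>"
      using frontier \<open>\<epsilon> > 0\<close> by (auto simp: D0)
  qed
qed

text \<open>At \<open>s = 2\<close> the apex \<open>(s, 1)\<close> of \<open>\<Delta>\<^sub>1\<^sub>,\<^sub>s\<^sub>,\<^sub>1\<close> jumps to the apex \<open>(1, 1/2)\<close> of \<open>\<Delta>\<^sub>2\<^sub>,\<^sub>1\<^sub>,\<^sub>1\<^sub>/\<^sub>2\<close>,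
  which lies at height \<open>1/2\<close> below it.\<close>

lemma not_Delta_continuous_at_jump:
  assumes D: "\<And>s. s \<in> {1<..<2} \<Longrightarrow> Delta_plus xi s = triangle 1 s 1"
    and D2: "Delta_plus xi 2 = triangle 2 1 (1 / 2)"
  shows "\<not> Delta_continuous_at xi 2"
proof
  assume "Delta_continuous_at xi 2"
  obtain \<delta> where "\<delta> > 0" and cont: "\<forall>s\<in>\<rat>. \<bar>s - 2\<bar> < \<delta> \<longrightarrow>
      (\<forall>v. v extreme_point_of Delta_plus xi s \<longrightarrow> infdist v (frontier (Delta_plus xi 2)) < 1 / 2)"
    using \<open>Delta_continuous_at xi 2\<close>[unfolded Delta_continuous_at_def, rule_format, of "1 / 2"]
    by auto
  obtain s where s: "s \<in> \<rat>" "max (2 - \<delta>) 1 < s" "s < 2"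
    using Rats_dense_in_real[of "max (2 - \<delta>) 1" 2] \<open>\<delta> > 0\<close> by auto
  have "(s, 1) extreme_point_of Delta_plus xi s"
    using D[of s] s by (simp add: apex_extreme_point_of_triangle)
  then have "infdist (s, 1) (frontier (Delta_plus xi 2)) < 1 / 2"
    using cont s by auto
  moreover have "1 / 2 \<le> infdist (s, 1) (frontier (Delta_plus xi 2))"
  proof -
    let ?F = "frontier (triangle 2 1 (1 / 2 :: real))"
    have "?F \<noteq> {}"
      using triangle_vertices_frontier(1)[of 2 1 "1 / 2"] by auto
    moreover have "1 / 2 \<le> (INF p\<in>?F. dist (s, 1) p)"
    proof (rule cINF_greatest[OF \<open>?F \<noteq> {}\<close>])
      fix p assume "p \<in> ?F"
      then have "p \<in> triangle 2 1 (1 / 2)"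
        using frontier_subset_closed[OF closed_triangle] by blast
      then have "snd p \<le> 1 / 2"
        by (rule snd_le_triangle) simp
      then show "1 / 2 \<le> dist (s, 1) p"
        using dist_snd_le[of "(s, 1)" p] by (simp add: dist_real_def)
    qed
    ultimately show ?thesis
      by (simp add: D2 infdist_def)
  qed
  ultimately show False
    by simp
qed

context normal_conic
begin

lemma Delta_mutates_at_iff: "Delta_mutates_at xi 2 s0 \<longleftrightarrow> s0 = 2"
proof
  assume mut: "Delta_mutates_at xi 2 s0"
  show "s0 = 2"
  proof (rule ccontr)
    assume "s0 \<noteq> 2"
    moreover have "1 < s0"
      using mut by (simp add: Delta_mutates_at_def)
    ultimately have "Delta_continuous_at xi s0"
    proof (cases "s0 < 2")
      case True
      show ?thesis
        by (rule Delta_continuous_at_triangleI[where U = "{1<..<2}" and g = id and a = 1 and c = 1])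
          (use True \<open>1 < s0\<close> Delta_plus_lt2[OF _ _ xi0 xi1] in auto)
    next
      case False
      with \<open>s0 \<noteq> 2\<close> show ?thesis
        by (intro Delta_continuous_at_triangleI[where U = "{2<..}" and g = "\<lambda>s. s / 2"
              and a = 2 and c = "1 / 2"])
          (auto simp: Delta_plus_ge2 intro!: continuous_intros)
    qed
    with mut show False
      by (simp add: Delta_mutates_at_def)
  qed
next
  assume "s0 = 2"
  moreover have "\<not> Delta_continuous_at xi 2"
    using Delta_plus_lt2[OF _ _ xi0 xi1] Delta_plus_ge2[of 2]
    by (intro not_Delta_continuous_at_jump) auto
  ultimately show "Delta_mutates_at xi 2 s0"
    by (simp add: Delta_mutates_at_def)
qed

end

theorem proposition5p24:
  fixes Q :: bipoly and xi :: "complex fps"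
  assumes conic: "tdeg Q = 2" and irred: "irreducible Q"
    and through_O: "val_O Q = 0"
    and smooth_O: "(dx_O Q, dy_O Q) \<noteq> (0, 0)"
    and tangent: "dx_O Q = 0"
    and xi0: "fps_nth xi 0 = 0" and xi1: "fps_nth xi 1 = 0"
    and branch: "subst_branch xi Q = 0"
  shows "(\<forall>s\<in>\<rat>. s \<ge> 1 \<longrightarrow>
            Delta_plus xi s = (if s < 2 then triangle 1 s 1 else triangle 2 (s/2) (1/2)))
       \<and> (\<forall>s0\<in>\<rat>. Delta_mutates_at xi 2 s0 \<longleftrightarrow> s0 = 2)
       \<and> (\<forall>s\<in>\<rat>. s \<ge> 1 \<longrightarrow> (v1_minimal xi s \<longleftrightarrow> s = 1 \<or> s = 4))"
proof -
  interpret normal_conic Q xi "poly.coeff (coeff Q 0) 2" "dy_O Q" "poly.coeff (coeff Q 1) 1"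
      "poly.coeff (coeff Q 2) 0"
    using assms by (intro normal_conicI) auto
  show ?thesis
    using Delta_plus_conic Delta_mutates_at_iff muhat_conic mu_conic_eq_sqrt_iff
    by (auto simp: v1_minimal_def)
qed

end
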